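(* A U-matroid $U=(E,\mathcal{D},\rho)$ is a poset matroid if and only if every basis of $U$ is an element of $\mathcal{D}$.
   Context: An accessible distributive lattice on finite $E$ is a family $\mathcal{D}\subseteq2^E$ containing $\emptyset,E$, closed under $\cup,\cap$, such that each nonempty $A\in\mathcal{D}$ has some $x$ with $A\setminus\{x\}\in\mathcal{D}$. A U-matroid is a triple $(E,\mathcal{D},\rho)$ with $\rho:\mathcal{D}\to\mathbb{N}$ satisfying $\rho(\emptyset)=0$; $\rho(A)\le\rho(B)$ for $A\subseteq B$; $\rho(A)+\rho(B)\ge\rho(A\cup B)+\rho(A\cap B)$; and $\rho(A\cup\{e\})-\rho(A)\le1$ whenever $A,A\cup\{e\}\in\mathcal{D}$. Its bases are the supports of the vertices of the base polyhedron $\{\mathbf{x}\in\mathbb{R}^E:\sum_{a\in A}x_a\le\rho(A)\ \forall A\in\mathcal{D},\ \sum_{e\in E}x_e=\rho(E)\}$. A poset matroid is a triple $(E,\mathcal{D},\rho)$ with $\mathcal{D}$ an accessible distributive lattice and $\rho:\mathcal{D}\to\mathbb{N}$ satisfying $\rho(\emptyset)=0$, monotonicity, unit increase, and the local chain property: whenever $A\in\mathcal{D}$, $b_1,b_2\in E$, $A_{12}=A\cup\{b_1,b_2\}\in\mathcal{D}$ and $\rho(A_{12})>\rho(A)$, there is $j\in\{1,2\}$ with $A\cup\{b_j\}\in\mathcal{D}$ and $\rho(A\cup\{b_j\})=\rho(A)+1$. *)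

theory Defs
  imports Main "HOL.Real"
begin

definition acc_dist_lattice :: "'a set \<Rightarrow> 'a set set \<Rightarrow> bool" where
  "acc_dist_lattice E D \<longleftrightarrow>
     finite E \<and> D \<subseteq> Pow E \<and> {} \<in> D \<and> E \<in> D \<and>
     (\<forall>A\<in>D. \<forall>B\<in>D. A \<union> B \<in> D \<and> A \<inter> B \<in> D) \<and>
     (\<forall>A\<in>D. A \<noteq> {} \<longrightarrow> (\<exists>x\<in>A. A - {x} \<in> D))"

text \<open>U-matroid (E, D, rho); rho is only relevant on D.\<close>
definition u_matroid :: "'a set \<Rightarrow> 'a set set \<Rightarrow> ('a set \<Rightarrow> nat) \<Rightarrow> bool" where
  "u_matroid E D \<rho> \<longleftrightarrow>
     acc_dist_lattice E D \<and> \<rho> {} = 0 \<and>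
     (\<forall>A\<in>D. \<forall>B\<in>D. A \<subseteq> B \<longrightarrow> \<rho> A \<le> \<rho> B) \<and>
     (\<forall>A\<in>D. \<forall>B\<in>D. \<rho> A + \<rho> B \<ge> \<rho> (A \<union> B) + \<rho> (A \<inter> B)) \<and>
     (\<forall>A e. A \<in> D \<longrightarrow> insert e A \<in> D \<longrightarrow> \<rho> (insert e A) \<le> \<rho> A + 1)"

definition poset_matroid :: "'a set \<Rightarrow> 'a set set \<Rightarrow> ('a set \<Rightarrow> nat) \<Rightarrow> bool" where
  "poset_matroid E D \<rho> \<longleftrightarrow>
     acc_dist_lattice E D \<and> \<rho> {} = 0 \<and>
     (\<forall>A\<in>D. \<forall>B\<in>D. A \<subseteq> B \<longrightarrow> \<rho> A \<le> \<rho> B) \<and>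
     (\<forall>A e. A \<in> D \<longrightarrow> insert e A \<in> D \<longrightarrow> \<rho> (insert e A) \<le> \<rho> A + 1) \<and>
     (\<forall>A b1 b2. A \<in> D \<longrightarrow> b1 \<in> E \<longrightarrow> b2 \<in> E \<longrightarrow>
        A \<union> {b1, b2} \<in> D \<longrightarrow> \<rho> (A \<union> {b1, b2}) > \<rho> A \<longrightarrow>
        (\<exists>j\<in>{b1, b2}. insert j A \<in> D \<and> \<rho> (insert j A) = \<rho> A + 1))"

text \<open>Vectors in R^E are modelled as functions 'a => real vanishing outside E.
  The base polyhedron of (E, D, rho).\<close>
definition base_polyhedron :: "'a set \<Rightarrow> 'a set set \<Rightarrow> ('a set \<Rightarrow> nat) \<Rightarrow> ('a \<Rightarrow> real) set" where
  "base_polyhedron E D \<rho> =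
     {x. (\<forall>e. e \<notin> E \<longrightarrow> x e = 0) \<and>
         (\<forall>A\<in>D. (\<Sum>a\<in>A. x a) \<le> real (\<rho> A)) \<and>
         (\<Sum>e\<in>E. x e) = real (\<rho> E)}"

definition is_vertex :: "('a \<Rightarrow> real) set \<Rightarrow> ('a \<Rightarrow> real) \<Rightarrow> bool" where
  "is_vertex P x \<longleftrightarrow> x \<in> P \<and>
     (\<forall>y\<in>P. \<forall>z\<in>P. \<forall>t::real. 0 < t \<and> t < 1 \<and> x = (\<lambda>e. t * y e + (1 - t) * z e)
        \<longrightarrow> y = z)"

definition supp :: "'a set \<Rightarrow> ('a \<Rightarrow> real) \<Rightarrow> 'a set" where
  "supp E x = {e\<in>E. x e \<noteq> 0}"

definition is_basis :: "'a set \<Rightarrow> 'a set set \<Rightarrow> ('a set \<Rightarrow> nat) \<Rightarrow> 'a set \<Rightarrow> bool" where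
  "is_basis E D \<rho> B \<longleftrightarrow> (\<exists>x. is_vertex (base_polyhedron E D \<rho>) x \<and> B = supp E x)"

end

theory Submission
  imports Defs
begin

(* The bases of a U-matroid are the supports of the greedy vectors of maximal chains
  {} = C0 < C1 < ... < Cn = E of D, which give the element of Ci - C(i-1) the value
  rho Ci - rho C(i-1). Submodularity puts such a vector into the base polyhedron, and tightness
  along the chain makes it a vertex. Conversely, the tight sets of a vertex form a sublattice of D
  in which every gap can be filled by one element (two elements e, f that no tight set separates
  would allow a perturbation along e - f), so it contains a maximal chain of D, and the vertex is
  the greedy vector of that chain.

  In a poset matroid, the local chain property upgrades to: a rank increase from A to C in D is
  realised by adding a single element of C - A; by induction along the chain, the support of a
  greedy vector then lies in D. Conversely, let A < A + b1 < A + b1 + b2 in D with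
  rho (A + b1) = rho A < rho (A + b1 + b2). The greedy basis of a maximal chain through these
  three sets contains b2 but not b1, so A + b2 = A \<union> (basis \<inter> (A + b1 + b2)) lies in D, and
  submodularity gives it rank rho A + 1. *)

lemma acc_dist_latticeD:
  assumes "acc_dist_lattice E D"
  shows acc_dist_lattice_finite: "finite E"
    and acc_dist_lattice_Pow: "D \<subseteq> Pow E"
    and acc_dist_lattice_empty: "{} \<in> D"
    and acc_dist_lattice_top: "E \<in> D"
    and acc_dist_lattice_Un: "A \<in> D \<Longrightarrow> B \<in> D \<Longrightarrow> A \<union> B \<in> D"
    and acc_dist_lattice_Int: "A \<in> D \<Longrightarrow> B \<in> D \<Longrightarrow> A \<inter> B \<in> D"
    and acc_dist_lattice_accessible: "A \<in> D \<Longrightarrow> A \<noteq> {} \<Longrightarrow> \<exists>x\<in>A. A - {x} \<in> D"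
  using assms unfolding acc_dist_lattice_def by auto

lemma acc_dist_lattice_finite_member:
  "acc_dist_lattice E D \<Longrightarrow> A \<in> D \<Longrightarrow> finite A"
  by (meson PowD acc_dist_lattice_finite acc_dist_lattice_Pow finite_subset subsetD)

lemma u_matroidD:
  assumes "u_matroid E D \<rho>"
  shows u_matroid_lattice: "acc_dist_lattice E D"
    and u_matroid_rank_empty: "\<rho> {} = 0"
    and u_matroid_mono: "A \<in> D \<Longrightarrow> B \<in> D \<Longrightarrow> A \<subseteq> B \<Longrightarrow> \<rho> A \<le> \<rho> B"
    and u_matroid_submodular: "A \<in> D \<Longrightarrow> B \<in> D \<Longrightarrow> \<rho> (A \<union> B) + \<rho> (A \<inter> B) \<le> \<rho> A + \<rho> B"
    and u_matroid_unit_increase: "A \<in> D \<Longrightarrow> insert e A \<in> D \<Longrightarrow> \<rho> (insert e A) \<le> \<rho> A + 1"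
  using assms unfolding u_matroid_def by auto

lemma poset_matroidD:
  assumes "poset_matroid E D \<rho>"
  shows poset_matroid_lattice: "acc_dist_lattice E D"
    and poset_matroid_mono: "A \<in> D \<Longrightarrow> B \<in> D \<Longrightarrow> A \<subseteq> B \<Longrightarrow> \<rho> A \<le> \<rho> B"
    and poset_matroid_unit_increase: "A \<in> D \<Longrightarrow> insert e A \<in> D \<Longrightarrow> \<rho> (insert e A) \<le> \<rho> A + 1"
    and poset_matroid_local_chain: "A \<in> D \<Longrightarrow> b1 \<in> E \<Longrightarrow> b2 \<in> E \<Longrightarrow> A \<union> {b1, b2} \<in> D \<Longrightarrow>
      \<rho> A < \<rho> (A \<union> {b1, b2}) \<Longrightarrow> \<exists>j\<in>{b1, b2}. insert j A \<in> D \<and> \<rho> (insert j A) = \<rho> A + 1"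
  using assms unfolding poset_matroid_def by auto

lemma acc_dist_lattice_augment:
  assumes L: "acc_dist_lattice E D" and "A \<in> D" "C \<in> D" "A \<subset> C"
  shows "\<exists>x\<in>C - A. insert x A \<in> D"
proof -
  have "C \<in> D \<and> C \<subseteq> C \<and> \<not> C \<subseteq> A" using assms by auto
  then obtain S where S: "S \<in> D" "S \<subseteq> C" "\<not> S \<subseteq> A"
    and least: "\<And>S'. S' \<in> D \<and> S' \<subseteq> C \<and> \<not> S' \<subseteq> A \<Longrightarrow> card S \<le> card S'"
    using ex_has_least_nat[of "\<lambda>S. S \<in> D \<and> S \<subseteq> C \<and> \<not> S \<subseteq> A" C card] by blast
  obtain x where x: "x \<in> S" "S - {x} \<in> D"
    using acc_dist_lattice_accessible[OF L S(1)] S(3) by blast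
  have "card (S - {x}) < card S"
    using x acc_dist_lattice_finite_member[OF L S(1)] by (meson card_Diff1_less)
  then have "S - {x} \<subseteq> A" using least[of "S - {x}"] x S by auto
  then have "A \<union> S = insert x A" "x \<notin> A" using S x by auto
  moreover have "A \<union> S \<in> D" using acc_dist_lattice_Un[OF L] assms S by blast
  ultimately show ?thesis using x S by auto
qed

section \<open>Chains encoded by lists\<close>

(* A list [x1, ..., xn] encodes the chain A < A + xn < A + xn + x(n-1) < ... < A \<union> {x1, ..., xn}:
  its sets are A joined with the suffixes of the list. *)
definition chain_above :: "'a set set \<Rightarrow> 'a set \<Rightarrow> 'a list \<Rightarrow> bool" where
  "chain_above F A ls \<longleftrightarrow> distinct ls \<and> A \<inter> set ls = {} \<and> (\<forall>k. A \<union> set (drop k ls) \<in> F)"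

lemma chain_above_Nil [simp]: "chain_above F A [] \<longleftrightarrow> A \<in> F"
  by (simp add: chain_above_def)

lemma chain_above_Cons:
  "chain_above F A (r # rs) \<longleftrightarrow>
     chain_above F A rs \<and> r \<notin> A \<and> r \<notin> set rs \<and> insert r (A \<union> set rs) \<in> F"
proof -
  have "(\<forall>k. A \<union> set (drop k (r # rs)) \<in> F) \<longleftrightarrow>
        insert r (A \<union> set rs) \<in> F \<and> (\<forall>k. A \<union> set (drop k rs) \<in> F)"
    by (metis Un_insert_right drop0 drop_Suc_Cons list.simps(15) not0_implies_Suc)
  then show ?thesis unfolding chain_above_def by auto
qed

lemma chain_above_bottom: "chain_above F A ls \<Longrightarrow> A \<in> F"
  unfolding chain_above_def by (metis drop_all order_refl set_empty sup_bot.right_neutral)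

lemma chain_above_top: "chain_above F A ls \<Longrightarrow> A \<union> set ls \<in> F"
  unfolding chain_above_def by (metis drop0)

lemma chain_above_append:
  "chain_above F A l2 \<Longrightarrow> chain_above F (A \<union> set l2) l1 \<Longrightarrow> chain_above F A (l1 @ l2)"
  by (induction l1) (auto simp: chain_above_Cons Un_ac)

lemma chain_above_exists:
  assumes "finite C" "A \<subseteq> C" "A \<in> F" "C \<in> F"
    and augment: "\<And>A'. A' \<in> F \<Longrightarrow> A' \<subset> C \<Longrightarrow> \<exists>x\<in>C - A'. insert x A' \<in> F"
  shows "\<exists>ls. chain_above F A ls \<and> A \<union> set ls = C"
  using assms(2,3)
proof (induction "card (C - A)" arbitrary: A rule: less_induct)
  case less
  show ?case
  proof (cases "A = C")
    case True
    then show ?thesis using less.prems by (intro exI[of _ "[]"]) auto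
  next
    case False
    then obtain x where x: "x \<in> C - A" "insert x A \<in> F"
      using augment less.prems by blast
    have "card (C - insert x A) < card (C - A)"
      using x assms(1) by (metis Diff_insert card_Diff1_less finite_Diff)
    then obtain ls where ls: "chain_above F (insert x A) ls" "insert x A \<union> set ls = C"
      using less.hyps[of "insert x A"] x less.prems by auto
    have "chain_above F A [x]" using x less.prems by (simp add: chain_above_Cons)
    then have "chain_above F A (ls @ [x])" using chain_above_append ls by fastforce
    then show ?thesis using ls by (intro exI[of _ "ls @ [x]"]) auto
  qed
qed

lemma chain_above_extend_maximal:
  assumes L: "acc_dist_lattice E D" and ch: "chain_above D A ls"
  shows "\<exists>l0 l3. chain_above D {} (l3 @ ls @ l0) \<and> set l0 = A \<and> set (l3 @ ls @ l0) = E"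
proof -
  have A: "A \<in> D" using chain_above_bottom[OF ch] .
  have top: "A \<union> set ls \<in> D" using chain_above_top[OF ch] .
  note augment = acc_dist_lattice_augment[OF L]
  have sub: "A \<union> set ls \<subseteq> E" "A \<subseteq> E" using top A acc_dist_lattice_Pow[OF L] by auto
  obtain l0 where l0: "chain_above D {} l0" "set l0 = A"
    using chain_above_exists[of A "{}" D] acc_dist_lattice_finite_member[OF L A]
      acc_dist_lattice_empty[OF L] A augment by auto
  obtain l3 where l3: "chain_above D (A \<union> set ls) l3" "A \<union> set ls \<union> set l3 = E"
    using chain_above_exists[of E "A \<union> set ls" D] acc_dist_lattice_finite[OF L]
      acc_dist_lattice_top[OF L] sub top augment by blast
  have "chain_above D {} (ls @ l0)" using chain_above_append[of D "{}" l0 ls] l0 ch by simp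
  moreover have "set (ls @ l0) = A \<union> set ls" using l0 by auto
  ultimately have "chain_above D {} (l3 @ ls @ l0)"
    using chain_above_append[of D "{}" "ls @ l0" l3] l3 by simp
  then show ?thesis using l0 l3 by auto
qed

section \<open>Greedy vectors\<close>

fun greedy_vector :: "('a set \<Rightarrow> nat) \<Rightarrow> 'a list \<Rightarrow> 'a \<Rightarrow> real" where
  "greedy_vector \<rho> [] = (\<lambda>_. 0)"
| "greedy_vector \<rho> (r # rs) =
     (greedy_vector \<rho> rs)(r := real (\<rho> (insert r (set rs))) - real (\<rho> (set rs)))"

lemma greedy_vector_outside: "e \<notin> set rs \<Longrightarrow> greedy_vector \<rho> rs e = 0"
  by (induction rs) auto

lemma greedy_vector_append: "e \<notin> set l1 \<Longrightarrow> greedy_vector \<rho> (l1 @ l2) e = greedy_vector \<rho> l2 e"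
  by (induction l1) auto

lemma sum_greedy_vector:
  "distinct rs \<Longrightarrow> (\<Sum>e\<in>set rs. greedy_vector \<rho> rs e) = real (\<rho> (set rs)) - real (\<rho> {})"
proof (induction rs)
  case (Cons r rs)
  have "(\<Sum>e\<in>set rs. greedy_vector \<rho> (r # rs) e) = (\<Sum>e\<in>set rs. greedy_vector \<rho> rs e)"
    using Cons.prems by (intro sum.cong) auto
  then show ?case using Cons by simp
qed simp

lemma sum_greedy_vector_suffix:
  assumes "distinct rs"
  shows "(\<Sum>e\<in>set (drop k rs). greedy_vector \<rho> rs e) = real (\<rho> (set (drop k rs))) - real (\<rho> {})"
proof -
  have "(\<Sum>e\<in>set (drop k rs). greedy_vector \<rho> rs e) = (\<Sum>e\<in>set (drop k rs). greedy_vector \<rho> (drop k rs) e)"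
    using assms by (intro sum.cong refl)
      (metis append_take_drop_id distinct_append disjoint_iff greedy_vector_append)
  also have "\<dots> = real (\<rho> (set (drop k rs))) - real (\<rho> {})"
    using assms by (intro sum_greedy_vector) simp
  finally show ?thesis .
qed

lemma eq_on_set_if_suffix_sums_eq:
  fixes y g :: "'a \<Rightarrow> real"
  assumes "distinct rs" "\<And>k. (\<Sum>e\<in>set (drop k rs). y e) = (\<Sum>e\<in>set (drop k rs). g e)"
  shows "\<forall>e\<in>set rs. y e = g e"
  using assms
proof (induction rs)
  case (Cons r rs)
  have "\<forall>e\<in>set rs. y e = g e"
  proof (rule Cons.IH)
    show "distinct rs" using Cons.prems(1) by simp
    show "(\<Sum>e\<in>set (drop k rs). y e) = (\<Sum>e\<in>set (drop k rs). g e)" for k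
      using Cons.prems(2)[of "Suc k"] by simp
  qed
  moreover have "y r = g r"
    using Cons.prems(1) Cons.prems(2)[of 0] Cons.prems(2)[of 1] by simp
  ultimately show ?case by simp
qed simp

lemma greedy_vector_sum_le_rank:
  assumes U: "u_matroid E D \<rho>" and ch: "chain_above D {} rs" and S: "S \<in> D"
  shows "(\<Sum>e\<in>S \<inter> set rs. greedy_vector \<rho> rs e) \<le> real (\<rho> (S \<inter> set rs))"
  using ch
proof (induction rs)
  case Nil
  then show ?case using u_matroid_rank_empty[OF U] by simp
next
  case (Cons r rs)
  let ?R = "set rs"
  have ch: "chain_above D {} rs" and r: "r \<notin> ?R" and R: "?R \<in> D" and rR: "insert r ?R \<in> D"
    using Cons.prems chain_above_top[of D "{}" rs] by (auto simp: chain_above_Cons)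
  have IH: "(\<Sum>e\<in>S \<inter> ?R. greedy_vector \<rho> rs e) \<le> real (\<rho> (S \<inter> ?R))"
    using Cons.IH[OF ch] .
  have same: "(\<Sum>e\<in>S \<inter> ?R. greedy_vector \<rho> (r # rs) e) = (\<Sum>e\<in>S \<inter> ?R. greedy_vector \<rho> rs e)"
    using r by (intro sum.cong) auto
  show ?case
  proof (cases "r \<in> S")
    case False
    then have "S \<inter> set (r # rs) = S \<inter> ?R" by auto
    then show ?thesis using same IH by simp
  next
    case True
    let ?P = "insert r (S \<inter> ?R)"
    have P: "S \<inter> set (r # rs) = ?P" using True by auto
    have "?P \<in> D"
      using acc_dist_lattice_Int[OF u_matroid_lattice[OF U] S rR] P by simp
    moreover have "?P \<union> ?R = insert r ?R" "?P \<inter> ?R = S \<inter> ?R" using r by auto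
    ultimately have "\<rho> (insert r ?R) + \<rho> (S \<inter> ?R) \<le> \<rho> ?P + \<rho> ?R"
      using u_matroid_submodular[OF U _ R] by metis
    then have submod: "real (\<rho> (insert r ?R)) - real (\<rho> ?R) + real (\<rho> (S \<inter> ?R)) \<le> real (\<rho> ?P)"
      by linarith
    have "(\<Sum>e\<in>?P. greedy_vector \<rho> (r # rs) e)
        = real (\<rho> (insert r ?R)) - real (\<rho> ?R) + (\<Sum>e\<in>S \<inter> ?R. greedy_vector \<rho> rs e)"
      using r same by simp
    also have "\<dots> \<le> real (\<rho> ?P)" using IH submod by linarith
    finally show ?thesis using P by simp
  qed
qed

lemma greedy_vector_in_base_polyhedron:
  assumes U: "u_matroid E D \<rho>" and ch: "chain_above D {} rs" and E: "set rs = E"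
  shows "greedy_vector \<rho> rs \<in> base_polyhedron E D \<rho>"
proof -
  have "(\<Sum>e\<in>S. greedy_vector \<rho> rs e) \<le> real (\<rho> S)" if "S \<in> D" for S
  proof -
    have "S \<inter> set rs = S" using that acc_dist_lattice_Pow[OF u_matroid_lattice[OF U]] E by auto
    then show ?thesis using greedy_vector_sum_le_rank[OF U ch that] by simp
  qed
  moreover have "(\<Sum>e\<in>E. greedy_vector \<rho> rs e) = real (\<rho> E)"
    using sum_greedy_vector[of rs \<rho>] ch E u_matroid_rank_empty[OF U] by (simp add: chain_above_def)
  ultimately show ?thesis
    unfolding base_polyhedron_def using E greedy_vector_outside by auto
qed

lemma base_polyhedron_eq_greedy_vector:
  assumes U: "u_matroid E D \<rho>" and y: "y \<in> base_polyhedron E D \<rho>"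
    and ch: "chain_above D {} rs" and E: "set rs = E"
    and tight: "\<And>k. (\<Sum>e\<in>set (drop k rs). y e) = real (\<rho> (set (drop k rs)))"
  shows "y = greedy_vector \<rho> rs"
proof
  fix e
  have "distinct rs" using ch by (simp add: chain_above_def)
  then have "\<forall>e\<in>set rs. y e = greedy_vector \<rho> rs e"
    using tight sum_greedy_vector_suffix[of rs \<rho>] u_matroid_rank_empty[OF U]
    by (intro eq_on_set_if_suffix_sums_eq) simp_all
  moreover have "e \<notin> E \<Longrightarrow> y e = 0" using y by (simp add: base_polyhedron_def)
  ultimately show "y e = greedy_vector \<rho> rs e" using E greedy_vector_outside by metis
qed

lemma convex_comb_eq_upper_bound:
  fixes a b c t :: real
  assumes "a \<le> c" "b \<le> c" "0 < t" "t < 1" "t * a + (1 - t) * b = c"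
  shows "a = c" "b = c"
proof -
  have "t * a \<le> t * c" "(1 - t) * b \<le> (1 - t) * c" using assms by simp_all
  moreover have "t * c + (1 - t) * c = c" by (simp add: algebra_simps)
  ultimately have "t * a = t * c" "(1 - t) * b = (1 - t) * c" using assms(5) by linarith+
  then show "a = c" "b = c" using assms(3,4) by simp_all
qed

lemma greedy_vector_vertex:
  assumes U: "u_matroid E D \<rho>" and ch: "chain_above D {} rs" and E: "set rs = E"
  shows "is_vertex (base_polyhedron E D \<rho>) (greedy_vector \<rho> rs)"
  unfolding is_vertex_def
proof (intro conjI ballI allI impI)
  show gP: "greedy_vector \<rho> rs \<in> base_polyhedron E D \<rho>"
    using greedy_vector_in_base_polyhedron[OF assms] .
  fix y z and t :: real
  assume y: "y \<in> base_polyhedron E D \<rho>" and z: "z \<in> base_polyhedron E D \<rho>"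
    and comb: "0 < t \<and> t < 1 \<and> greedy_vector \<rho> rs = (\<lambda>e. t * y e + (1 - t) * z e)"
  have tight: "(\<Sum>e\<in>set (drop k rs). y e) = real (\<rho> (set (drop k rs)))
      \<and> (\<Sum>e\<in>set (drop k rs). z e) = real (\<rho> (set (drop k rs)))" for k
  proof -
    let ?S = "set (drop k rs)"
    have "?S \<in> D" using ch by (simp add: chain_above_def)
    then have "sum y ?S \<le> real (\<rho> ?S)" "sum z ?S \<le> real (\<rho> ?S)"
      using y z by (auto simp: base_polyhedron_def)
    moreover have "t * sum y ?S + (1 - t) * sum z ?S = real (\<rho> ?S)"
      using sum_greedy_vector_suffix[of rs \<rho> k] ch comb u_matroid_rank_empty[OF U]
      by (simp add: chain_above_def sum.distrib sum_distrib_left)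
    ultimately show ?thesis using convex_comb_eq_upper_bound comb by blast
  qed
  show "y = z"
    using base_polyhedron_eq_greedy_vector[OF U _ ch E] y z tight by metis
qed

section \<open>Vertices of the base polyhedron\<close>

definition tight_sets :: "'a set set \<Rightarrow> ('a set \<Rightarrow> nat) \<Rightarrow> ('a \<Rightarrow> real) \<Rightarrow> 'a set set" where
  "tight_sets D \<rho> x = {S \<in> D. (\<Sum>e\<in>S. x e) = real (\<rho> S)}"

lemma tight_sets_Un_Int:
  assumes U: "u_matroid E D \<rho>" and x: "x \<in> base_polyhedron E D \<rho>"
    and S: "S \<in> tight_sets D \<rho> x" and V: "V \<in> tight_sets D \<rho> x"
  shows "S \<union> V \<in> tight_sets D \<rho> x" "S \<inter> V \<in> tight_sets D \<rho> x"
proof -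
  note L = u_matroid_lattice[OF U]
  have SD: "S \<in> D" and VD: "V \<in> D" using S V by (auto simp: tight_sets_def)
  have UD: "S \<union> V \<in> D" and ID: "S \<inter> V \<in> D"
    using acc_dist_lattice_Un[OF L SD VD] acc_dist_lattice_Int[OF L SD VD] .
  have "sum x (S \<union> V) \<le> real (\<rho> (S \<union> V))" "sum x (S \<inter> V) \<le> real (\<rho> (S \<inter> V))"
    using x UD ID by (auto simp: base_polyhedron_def)
  moreover have "real (\<rho> (S \<union> V)) + real (\<rho> (S \<inter> V)) \<le> real (\<rho> S) + real (\<rho> V)"
    using u_matroid_submodular[OF U SD VD] by linarith
  moreover have "sum x (S \<union> V) + sum x (S \<inter> V) = sum x S + sum x V"
    using sum.union_inter acc_dist_lattice_finite_member[OF L] SD VD by blast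
  moreover have "sum x S = real (\<rho> S)" "sum x V = real (\<rho> V)"
    using S V by (auto simp: tight_sets_def)
  ultimately have "sum x (S \<union> V) = real (\<rho> (S \<union> V))" "sum x (S \<inter> V) = real (\<rho> (S \<inter> V))"
    by linarith+
  then show "S \<union> V \<in> tight_sets D \<rho> x" "S \<inter> V \<in> tight_sets D \<rho> x"
    using UD ID by (auto simp: tight_sets_def)
qed

lemma finite_ex_pos_lower_bound:
  fixes f :: "'b \<Rightarrow> real"
  assumes "finite S" "\<And>s. s \<in> S \<Longrightarrow> 0 < f s"
  shows "\<exists>\<epsilon>>0. \<forall>s\<in>S. \<epsilon> \<le> f s"
  using assms
proof (induction rule: finite_induct)
  case empty
  show ?case by (intro exI[of _ 1]) simp
next
  case (insert s S)
  then obtain \<epsilon> where "\<epsilon> > 0" "\<forall>s\<in>S. \<epsilon> \<le> f s" by blast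
  then show ?case using insert.prems by (intro exI[of _ "min \<epsilon> (f s)"]) auto
qed

lemma base_polyhedron_slack_bound:
  assumes U: "u_matroid E D \<rho>" and x: "x \<in> base_polyhedron E D \<rho>"
  obtains \<epsilon> :: real where "\<epsilon> > 0"
    "\<And>V. V \<in> D \<Longrightarrow> V \<notin> tight_sets D \<rho> x \<Longrightarrow> \<epsilon> \<le> real (\<rho> V) - sum x V"
proof -
  note L = u_matroid_lattice[OF U]
  have "finite (D - tight_sets D \<rho> x)"
    using acc_dist_lattice_finite[OF L] acc_dist_lattice_Pow[OF L]
    by (meson finite_Diff finite_Pow_iff finite_subset)
  moreover have "0 < real (\<rho> V) - sum x V" if V: "V \<in> D - tight_sets D \<rho> x" for V
  proof -
    have "sum x V \<le> real (\<rho> V)" using x V by (simp add: base_polyhedron_def)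
    moreover have "sum x V \<noteq> real (\<rho> V)" using V by (simp add: tight_sets_def)
    ultimately show ?thesis by linarith
  qed
  ultimately obtain \<epsilon> where "\<epsilon> > 0" "\<forall>V\<in>D - tight_sets D \<rho> x. \<epsilon> \<le> real (\<rho> V) - sum x V"
    using finite_ex_pos_lower_bound[of "D - tight_sets D \<rho> x" "\<lambda>V. real (\<rho> V) - sum x V"]
    by blast
  then show ?thesis using that by blast
qed

lemma is_vertexD:
  assumes "is_vertex P x" "y \<in> P" "z \<in> P" "0 < t" "t < 1" "x = (\<lambda>e. t * y e + (1 - t) * z e)"
  shows "y = z"
  using assms unfolding is_vertex_def by blast

lemma vertex_tight_sets_separate:
  assumes U: "u_matroid E D \<rho>" and vx: "is_vertex (base_polyhedron E D \<rho>) x"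
    and e: "e \<in> E" and f: "f \<in> E" and ef: "e \<noteq> f"
  shows "\<exists>S\<in>tight_sets D \<rho> x. e \<in> S \<longleftrightarrow> f \<notin> S"
proof (rule ccontr)
  assume "\<not> ?thesis"
  then have same: "e \<in> S \<longleftrightarrow> f \<in> S" if "S \<in> tight_sets D \<rho> x" for S
    using that by blast
  have x: "x \<in> base_polyhedron E D \<rho>" using vx by (simp add: is_vertex_def)
  note L = u_matroid_lattice[OF U]
  obtain \<epsilon> where \<epsilon>: "\<epsilon> > 0"
    and slack: "\<And>V. V \<in> D \<Longrightarrow> V \<notin> tight_sets D \<rho> x \<Longrightarrow> \<epsilon> \<le> real (\<rho> V) - sum x V"
    using base_polyhedron_slack_bound[OF U x] by blast
  define d :: "'a \<Rightarrow> real" where "d g = (if g = e then 1 else 0) - (if g = f then 1 else 0)" for g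
  have sum_d: "sum d V = (if e \<in> V then 1 else 0) - (if f \<in> V then 1 else 0)" if "finite V" for V
    using that by (simp add: d_def sum_subtractf)
  \<comment> \<open>Tight sets contain both or neither of e, f, so d sums to 0 on them; other sets have slack \<ge> \<epsilon>.\<close>
  have move: "(\<lambda>g. x g + s * d g) \<in> base_polyhedron E D \<rho>" if s: "\<bar>s\<bar> \<le> \<epsilon>" for s
  proof -
    have sum_move: "(\<Sum>g\<in>V. x g + s * d g) = sum x V + s * sum d V" for V
      by (simp add: sum.distrib sum_distrib_left)
    have "(\<Sum>g\<in>V. x g + s * d g) \<le> real (\<rho> V)" if V: "V \<in> D" for V
    proof (cases "V \<in> tight_sets D \<rho> x")
      case True
      then show ?thesis
        using same sum_d sum_move acc_dist_lattice_finite_member[OF L V] by (simp add: tight_sets_def)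
    next
      case False
      have "\<bar>s * sum d V\<bar> \<le> \<epsilon>"
        using s sum_d[OF acc_dist_lattice_finite_member[OF L V]] \<epsilon>
        by (auto simp: abs_mult intro: order_trans[OF mult_left_le])
      then show ?thesis using slack[OF V False] sum_move[of V] by linarith
    qed
    moreover have "(\<Sum>g\<in>E. x g + s * d g) = real (\<rho> E)"
      using sum_move[of E] sum_d[OF acc_dist_lattice_finite[OF L]] e f x
      by (simp add: base_polyhedron_def)
    moreover have "x g + s * d g = 0" if "g \<notin> E" for g
      using that e f x by (auto simp: base_polyhedron_def d_def)
    ultimately show ?thesis by (simp add: base_polyhedron_def)
  qed
  have midpoint: "x = (\<lambda>g. 1/2 * (x g + \<epsilon> * d g) + (1 - 1/2) * (x g + (- \<epsilon>) * d g))"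
    by (simp add: algebra_simps)
  have "(\<lambda>g. x g + \<epsilon> * d g) = (\<lambda>g. x g + (- \<epsilon>) * d g)"
    by (rule is_vertexD[OF vx move[of \<epsilon>] move[of "- \<epsilon>"] _ _ midpoint]) (use \<epsilon> in simp_all)
  then have "\<epsilon> * d e = - \<epsilon> * d e" by (metis add_left_cancel)
  then show False using \<epsilon> ef by (simp add: d_def)
qed

lemma tight_sets_augment:
  assumes U: "u_matroid E D \<rho>" and vx: "is_vertex (base_polyhedron E D \<rho>) x"
    and A: "A \<in> tight_sets D \<rho> x" and C: "C \<in> tight_sets D \<rho> x" and AC: "A \<subset> C"
  shows "\<exists>e\<in>C - A. insert e A \<in> tight_sets D \<rho> x"
proof -
  let ?T = "tight_sets D \<rho> x"
  have x: "x \<in> base_polyhedron E D \<rho>" using vx by (simp add: is_vertex_def)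
  have T_sub: "S \<subseteq> E" "finite S" if "S \<in> ?T" for S
    using that acc_dist_lattice_Pow[OF u_matroid_lattice[OF U]]
      acc_dist_lattice_finite_member[OF u_matroid_lattice[OF U]] by (auto simp: tight_sets_def)
  have "C \<in> ?T \<and> A \<subset> C \<and> C \<subseteq> C" using C AC by blast
  then obtain S where S: "S \<in> ?T" "A \<subset> S" "S \<subseteq> C"
    and least: "\<And>S'. S' \<in> ?T \<and> A \<subset> S' \<and> S' \<subseteq> C \<Longrightarrow> card S \<le> card S'"
    using ex_has_least_nat[of "\<lambda>S. S \<in> ?T \<and> A \<subset> S \<and> S \<subseteq> C" C card] by blast
  \<comment> \<open>(V \<inter> S) \<union> A is tight and lies strictly between A and S, so it is S by minimality.\<close>
  have absorb: "S - A \<subseteq> V" if V: "V \<in> ?T" and e: "e \<in> S - A" "e \<in> V" for V e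
  proof -
    have W: "(V \<inter> S) \<union> A \<in> ?T"
      using tight_sets_Un_Int[OF U x] V S(1) A by blast
    have "A \<subset> (V \<inter> S) \<union> A" "(V \<inter> S) \<union> A \<subseteq> S" using e S by auto
    then have "(V \<inter> S) \<union> A = S"
      using least[of "(V \<inter> S) \<union> A"] W S T_sub(2)[OF S(1)] by (meson card_seteq order_trans)
    then show ?thesis by auto
  qed
  obtain e where e: "e \<in> S - A" using S by auto
  have "S = insert e A"
  proof (rule ccontr)
    assume "S \<noteq> insert e A"
    then obtain f where f: "f \<in> S - A" "f \<noteq> e" using e S by auto
    obtain V where "V \<in> ?T" "e \<in> V \<longleftrightarrow> f \<notin> V"
      using vertex_tight_sets_separate[OF U vx _ _ f(2)[symmetric]] e f S(1) T_sub by blast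
    then show False using absorb e f by blast
  qed
  then show ?thesis using e S by auto
qed

lemma vertex_eq_greedy_vector:
  assumes U: "u_matroid E D \<rho>" and vx: "is_vertex (base_polyhedron E D \<rho>) x"
  obtains rs where "chain_above D {} rs" "set rs = E" "x = greedy_vector \<rho> rs"
proof -
  let ?T = "tight_sets D \<rho> x"
  note L = u_matroid_lattice[OF U]
  have x: "x \<in> base_polyhedron E D \<rho>" using vx by (simp add: is_vertex_def)
  have "{} \<in> ?T" "E \<in> ?T"
    using acc_dist_lattice_empty[OF L] acc_dist_lattice_top[OF L] u_matroid_rank_empty[OF U] x
    by (auto simp: tight_sets_def base_polyhedron_def)
  then obtain rs where rs: "chain_above ?T {} rs" "set rs = E"
    using chain_above_exists[of E "{}" ?T] acc_dist_lattice_finite[OF L]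
      tight_sets_augment[OF U vx] by auto
  then have "chain_above D {} rs" by (auto simp: chain_above_def tight_sets_def)
  moreover have "x = greedy_vector \<rho> rs"
    using base_polyhedron_eq_greedy_vector[OF U x calculation rs(2)] rs(1)
    by (simp add: chain_above_def tight_sets_def)
  ultimately show ?thesis using that rs(2) by blast
qed

lemma is_basis_iff_greedy_support:
  assumes "u_matroid E D \<rho>"
  shows "is_basis E D \<rho> B \<longleftrightarrow>
    (\<exists>rs. chain_above D {} rs \<and> set rs = E \<and> B = supp E (greedy_vector \<rho> rs))"
  using greedy_vector_vertex[OF assms] vertex_eq_greedy_vector[OF assms]
  unfolding is_basis_def by metis

section \<open>Bases of poset matroids\<close>

lemma poset_matroid_augment_rank:
  assumes PM: "poset_matroid E D \<rho>" and C: "C \<in> D"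
  shows "A \<in> D \<Longrightarrow> A \<subseteq> C \<Longrightarrow> \<rho> A < \<rho> C \<Longrightarrow>
    \<exists>f\<in>C - A. insert f A \<in> D \<and> \<rho> (insert f A) = \<rho> A + 1"
proof (induction "card (C - A)" arbitrary: A rule: less_induct)
  case less
  note L = poset_matroid_lattice[OF PM]
  have "A \<subset> C" using less.prems by auto
  then obtain f where f: "f \<in> C - A" "insert f A \<in> D"
    using acc_dist_lattice_augment[OF L less.prems(1) C] by blast
  have "\<rho> A \<le> \<rho> (insert f A)" "\<rho> (insert f A) \<le> \<rho> A + 1"
    using poset_matroid_mono[OF PM less.prems(1) f(2)] poset_matroid_unit_increase[OF PM less.prems(1) f(2)]
    by auto
  then consider "\<rho> (insert f A) = \<rho> A + 1" | "\<rho> (insert f A) = \<rho> A" by linarith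
  then show ?case
  proof cases
    case 1
    then show ?thesis using f by blast
  next
    case 2
    \<comment> \<open>No rank gain at f: go one step higher and use the local chain property at A.\<close>
    have "card (C - insert f A) < card (C - A)"
      using f acc_dist_lattice_finite_member[OF L C] by (metis Diff_insert card_Diff1_less finite_Diff)
    moreover have "insert f A \<subseteq> C" "\<rho> (insert f A) < \<rho> C" using f less.prems 2 by auto
    ultimately obtain g where g: "g \<in> C - insert f A" "insert g (insert f A) \<in> D"
        "\<rho> (insert g (insert f A)) = \<rho> (insert f A) + 1"
      using less.hyps f(2) by blast
    have "A \<union> {f, g} = insert g (insert f A)" by auto
    then have "A \<union> {f, g} \<in> D" "\<rho> A < \<rho> (A \<union> {f, g})" using g 2 by simp_all
    moreover have "f \<in> E" "g \<in> E"
      using f g C acc_dist_lattice_Pow[OF L] by auto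
    ultimately have "\<exists>j\<in>{f, g}. insert j A \<in> D \<and> \<rho> (insert j A) = \<rho> A + 1"
      using poset_matroid_local_chain[OF PM less.prems(1)] by blast
    then show ?thesis using f g by auto
  qed
qed

lemma poset_matroid_greedy_support:
  assumes PM: "poset_matroid E D \<rho>" and ch: "chain_above D {} rs"
  shows "supp (set rs) (greedy_vector \<rho> rs) \<in> D \<and>
    \<rho> (supp (set rs) (greedy_vector \<rho> rs)) = \<rho> (set rs)"
  using ch
proof (induction rs)
  case Nil
  then show ?case by (simp add: supp_def)
next
  case (Cons r rs)
  let ?R = "set rs" and ?B = "supp (set rs) (greedy_vector \<rho> rs)"
  have ch: "chain_above D {} rs" and r: "r \<notin> ?R" and rR: "insert r ?R \<in> D"
    using Cons.prems by (auto simp: chain_above_Cons)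
  have R: "?R \<in> D" using chain_above_top[OF ch] by simp
  have IH: "?B \<in> D" "\<rho> ?B = \<rho> ?R" using Cons.IH[OF ch] by auto
  have "\<rho> ?R \<le> \<rho> (insert r ?R)" "\<rho> (insert r ?R) \<le> \<rho> ?R + 1"
    using poset_matroid_mono[OF PM R rR] poset_matroid_unit_increase[OF PM R rR] by auto
  then consider "\<rho> (insert r ?R) = \<rho> ?R" | "\<rho> (insert r ?R) = \<rho> ?R + 1" by linarith
  then show ?case
  proof cases
    case 1
    then have B: "supp (set (r # rs)) (greedy_vector \<rho> (r # rs)) = ?B"
      using r by (auto simp: supp_def)
    show ?thesis unfolding B using IH 1 by simp
  next
    case 2
    then have B: "supp (set (r # rs)) (greedy_vector \<rho> (r # rs)) = insert r ?B"
      using r by (auto simp: supp_def)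
    have "?B \<subseteq> insert r ?R" by (auto simp: supp_def)
    then obtain f where f: "f \<in> insert r ?R - ?B" "insert f ?B \<in> D" "\<rho> (insert f ?B) = \<rho> ?B + 1"
      using poset_matroid_augment_rank[OF PM rR IH(1)] IH(2) 2 by auto
    \<comment> \<open>Within set rs the rank cannot exceed \<rho> (set rs) = \<rho> ?B, so the new element is r.\<close>
    have "f = r"
    proof (rule ccontr)
      assume "f \<noteq> r"
      then have "insert f ?B \<subseteq> ?R" using f by (auto simp: supp_def)
      then show False using poset_matroid_mono[OF PM f(2) R] f IH by simp
    qed
    then show ?thesis unfolding B using f IH 2 by simp
  qed
qed

section \<open>The local chain property\<close>

lemma bases_in_lattice_rank_exchange:
  assumes U: "u_matroid E D \<rho>" and bases: "\<And>B. is_basis E D \<rho> B \<Longrightarrow> B \<in> D"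
    and A: "A \<in> D" and new: "b1 \<notin> A" "b2 \<notin> A" "b1 \<noteq> b2"
    and A1: "insert b1 A \<in> D" and A12: "A \<union> {b1, b2} \<in> D"
    and flat: "\<rho> (insert b1 A) = \<rho> A" and up: "\<rho> A < \<rho> (A \<union> {b1, b2})"
  shows "insert b2 A \<in> D \<and> \<rho> (insert b2 A) = \<rho> A + 1"
proof -
  note L = u_matroid_lattice[OF U]
  have "A \<union> {b1, b2} = insert b2 (insert b1 A)" by auto
  then have "chain_above D A [b2, b1]" using A A1 A12 new by (simp add: chain_above_Cons)
  then obtain l0 l3 where ch: "chain_above D {} (l3 @ [b2, b1] @ l0)"
    and l0: "set l0 = A" and E: "set (l3 @ [b2, b1] @ l0) = E"
    using chain_above_extend_maximal[OF L] by blast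
  let ?g = "greedy_vector \<rho> (l3 @ [b2, b1] @ l0)"
  have B: "supp E ?g \<in> D" using bases is_basis_iff_greedy_support[OF U] ch E by blast
  have "b1 \<notin> set l3" "b2 \<notin> set l3" using ch by (auto simp: chain_above_def)
  then have "?g b1 = real (\<rho> (insert b1 A)) - real (\<rho> A)"
    "?g b2 = real (\<rho> (A \<union> {b1, b2})) - real (\<rho> (insert b1 A))"
    using l0 new by (simp_all add: greedy_vector_append insert_commute)
  then have "b1 \<notin> supp E ?g" "b2 \<in> supp E ?g" using flat up E by (auto simp: supp_def)
  then have "insert b2 A = A \<union> (supp E ?g \<inter> (A \<union> {b1, b2}))" by auto
  then have A2: "insert b2 A \<in> D"
    using acc_dist_lattice_Un[OF L A acc_dist_lattice_Int[OF L B A12]] by simp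
  have "insert b1 A \<union> insert b2 A = A \<union> {b1, b2}" "insert b1 A \<inter> insert b2 A = A"
    using new by auto
  then have "\<rho> (A \<union> {b1, b2}) + \<rho> A \<le> \<rho> (insert b1 A) + \<rho> (insert b2 A)"
    using u_matroid_submodular[OF U A1 A2] by simp
  then show ?thesis using A2 u_matroid_unit_increase[OF U A A2] flat up by simp
qed

lemma bases_in_lattice_local_chain:
  assumes U: "u_matroid E D \<rho>" and bases: "\<And>B. is_basis E D \<rho> B \<Longrightarrow> B \<in> D"
    and A: "A \<in> D" and A12: "A \<union> {b1, b2} \<in> D" and up: "\<rho> A < \<rho> (A \<union> {b1, b2})"
  shows "\<exists>j\<in>{b1, b2}. insert j A \<in> D \<and> \<rho> (insert j A) = \<rho> A + 1"
proof -
  have single: "?thesis" if "j \<in> {b1, b2}" "A \<union> {b1, b2} = insert j A" for j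
    using that A12 up u_matroid_unit_increase[OF U A, of j] by force
  show ?thesis
  proof (cases "b1 \<in> A \<or> b2 \<in> A \<or> b1 = b2")
    case True
    then show ?thesis using single[of b1] single[of b2] by auto
  next
    case False
    then have "A \<subset> A \<union> {b1, b2}" by auto
    then obtain y where y: "y \<in> {b1, b2}" "insert y A \<in> D"
      using acc_dist_lattice_augment[OF u_matroid_lattice[OF U] A A12] by auto
    define z where "z = (if y = b1 then b2 else b1)"
    have yz: "{y, z} = {b1, b2}" "y \<notin> A" "z \<notin> A" "y \<noteq> z" "insert y A \<in> D"
      using y False by (auto simp: z_def)
    then have A12': "A \<union> {y, z} \<in> D" "\<rho> A < \<rho> (A \<union> {y, z})" using A12 up by simp_all
    have "\<rho> A \<le> \<rho> (insert y A)" "\<rho> (insert y A) \<le> \<rho> A + 1"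
      using u_matroid_mono[OF U A yz(5)] u_matroid_unit_increase[OF U A yz(5)] by auto
    then consider "\<rho> (insert y A) = \<rho> A + 1" | "\<rho> (insert y A) = \<rho> A" by linarith
    then show ?thesis
    proof cases
      case 1
      then show ?thesis using yz by blast
    next
      case 2
      then show ?thesis
        using bases_in_lattice_rank_exchange[OF U bases A yz(2-5) A12'(1) 2 A12'(2)] yz(1) by blast
    qed
  qed
qed

theorem theorem7p2:
  fixes E :: "'a set" and D :: "'a set set" and \<rho> :: "'a set \<Rightarrow> nat"
  assumes "u_matroid E D \<rho>"
  shows "poset_matroid E D \<rho> \<longleftrightarrow> (\<forall>B. is_basis E D \<rho> B \<longrightarrow> B \<in> D)"
proof
  assume "poset_matroid E D \<rho>"
  then show "\<forall>B. is_basis E D \<rho> B \<longrightarrow> B \<in> D"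
    using is_basis_iff_greedy_support[OF assms] poset_matroid_greedy_support by metis
next
  assume "\<forall>B. is_basis E D \<rho> B \<longrightarrow> B \<in> D"
  then have "\<exists>j\<in>{b1, b2}. insert j A \<in> D \<and> \<rho> (insert j A) = \<rho> A + 1"
    if "A \<in> D" "A \<union> {b1, b2} \<in> D" "\<rho> A < \<rho> (A \<union> {b1, b2})" for A b1 b2
    using bases_in_lattice_local_chain[OF assms _ that] by blast
  then show "poset_matroid E D \<rho>"
    using u_matroid_lattice[OF assms] u_matroid_rank_empty[OF assms] u_matroid_mono[OF assms]
      u_matroid_unit_increase[OF assms]
    unfolding poset_matroid_def by blast
qed

end
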